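(* Consider the system \[ \begin{aligned} \dot T(t)&= s-dT(t)+aT(t)\Big(1-\frac{T(t)+I(t)}{T_{\max}}\Big)-\frac{bT(t)V(t)}{1+\alpha V(t)},\\ \dot I(t)&= \frac{bT(t-\tau)V(t-\tau)}{1+\alpha V(t-\tau)}+aI(t)\Big(1-\frac{T(t)+I(t)}{T_{\max}}\Big)-\mu I(t),\\ \dot V(t)&= pI(t)-cV(t), \end{aligned} \] with positive constants $s,d,a,T_{\max},b,\alpha,\mu,p,c$ and $\tau\ge0$, and let $E_2=(T_2,I_2,V_2)$ be an infected equilibrium ($T_2,I_2,V_2>0$). Let $a_2,a_1,a_0,b_1,b_0,A,B,C,\Delta,z_1,\tau_0$ be as defined below, and suppose $a_0+b_0>0$ and $a_2(a_1+b_1)-(a_0+b_0)>0$. (a) If $C\ge0$ and $\Delta=A^2-3B<0$, then all roots of $\lambda^3+a_2\lambda^2+a_1\lambda+a_0+(b_1\lambda+b_0)e^{-\lambda\tau}=0$ have negative real parts for all $\tau\ge0$, so $E_2$ is locally asymptotically stable for all $\tau\ge0$. (b) If $C<0$, or if $C\ge0$, $z_1>0$ and $z_1^3+Az_1^2+Bz_1+C\le0$, then all roots of that equation have negative real parts when $\tau\in[0,\tau_0)$, so $E_2$ is locally asymptotically stable for $\tau\in[0,\tau_0)$.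
   Context: Set $\beta=\frac{bV_2}{1+\alpha V_2}$, $k=\frac{aT_2}{T_{\max}}$, $q=\frac{aI_2}{T_{\max}}$, $m=\frac{bT_2}{(1+\alpha V_2)^2}$, $\kappa=\frac{pI_2}{V_2}$, $\rho=d-a+\frac{a(T_2+I_2)}{T_{\max}}$, $A_{11}=\rho+k+\beta$, $A_{22}=\frac{bT_2V_2}{(1+\alpha V_2)I_2}+q$, $a_2=A_{11}+A_{22}+\kappa$, $a_1=A_{11}A_{22}+\kappa A_{11}+\kappa A_{22}-kq$, $a_0=\kappa A_{11}A_{22}-\kappa kq-pqm$, $b_1=\beta k-pm$, $b_0=\beta k\kappa+\beta pm-pmA_{11}$; with these, the characteristic equation of the linearization at $E_2$ is $\lambda^3+a_2\lambda^2+a_1\lambda+a_0+(b_1\lambda+b_0)e^{-\lambda\tau}=0$. Let $A=a_2^2-2a_1$, $B=a_1^2-2a_2a_0-b_1^2$, $C=a_0^2-b_0^2$, $\Delta=A^2-3B$, and, when $\Delta\ge0$, $z_1=\frac{-A+\sqrt{\Delta}}{3}$ (the condition $z_1>0$ includes that $\Delta\ge0$). When $z^3+Az^2+Bz+C=0$ has a positive root, let $z_0$ be its smallest positive root, $\omega_0=\sqrt{z_0}$, and \[ \tau_0=\frac{1}{\omega_0}\arccos\Big[\frac{b_0(a_2\omega_0^2-a_0)+b_1\omega_0(\omega_0^3-a_1\omega_0)}{b_0^2+b_1^2\omega_0^2}\Big]. \] *)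

theory Defs
  imports "HOL-Analysis.Analysis"
begin

text \<open>Smallest positive root z0 of z^3 + A z^2 + B z + C = 0 (meaningful when one exists).\<close>
definition smallest_pos_root :: "real \<Rightarrow> real \<Rightarrow> real \<Rightarrow> real" where
  "smallest_pos_root A B C = Min {z::real. z > 0 \<and> z^3 + A*z^2 + B*z + C = 0}"

definition tau0 :: "real \<Rightarrow> real \<Rightarrow> real \<Rightarrow> real \<Rightarrow> real \<Rightarrow> real \<Rightarrow> real \<Rightarrow> real \<Rightarrow> real" where
  "tau0 a2 a1 a0 b1 b0 A B C =
     (let w = sqrt (smallest_pos_root A B C) in
      (1 / w) * arccos ((b0 * (a2 * w^2 - a0) + b1 * w * (w^3 - a1 * w)) / (b0^2 + b1^2 * w^2)))"

definition char_eq :: "real \<Rightarrow> real \<Rightarrow> real \<Rightarrow> real \<Rightarrow> real \<Rightarrow> real \<Rightarrow> complex \<Rightarrow> bool" where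
  "char_eq a2 a1 a0 b1 b0 \<tau> lam \<longleftrightarrow>
     lam^3 + of_real a2 * lam^2 + of_real a1 * lam + of_real a0
       + (of_real b1 * lam + of_real b0) * exp (- lam * of_real \<tau>) = 0"

end

theory Submission
  imports Defs "HOL-Complex_Analysis.Complex_Analysis"
begin

text \<open>
  The roots of the characteristic quasi-polynomial depend continuously on the delay (Hurwitz's
  theorem), and roots with \<open>Re \<lambda> \<ge> 0\<close> stay in a fixed disc. Hence, on an interval of delays
  without roots on the imaginary axis, the set of delays with a root in the closed right half-plane
  is closed and its complement is closed as well, so it is empty once it misses \<open>\<tau> = 0\<close>. At
  \<open>\<tau> = 0\<close> the equation is a cubic, stable by the Routh-Hurwitz conditions \<open>a0 + b0 > 0\<close> and
  \<open>a2 (a1 + b1) > a0 + b0\<close>. A root \<open>\<i> \<omega>\<close> forces \<open>\<omega>\<^sup>2\<close> to be a positive root of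
  \<open>z\<^sup>3 + A z\<^sup>2 + B z + C\<close> and determines \<open>cos (\<omega> \<tau>)\<close>.

  For the model \<open>A > 0\<close> always, and \<open>C \<ge> 0\<close> implies \<open>B \<ge> 0\<close>. Then the cubic has no positive
  root, so (a) holds without the hypothesis \<open>\<Delta> < 0\<close>, and \<open>z1 \<le> 0\<close>, so the second alternative
  of (b) never occurs. For \<open>C < 0\<close> the cubic has exactly one positive root \<open>z0\<close>, and \<open>\<tau>0\<close> is
  the least delay compatible with the resulting value of \<open>cos (\<omega> \<tau>)\<close>.
\<close>

lemma uniform_limit_of_jointly_continuous:
  fixes f :: "'a::heine_borel \<Rightarrow> 'b::metric_space \<Rightarrow> 'c::metric_space"
  assumes cont: "continuous_on (T \<times> K) (\<lambda>(t, z). f t z)" and "compact K"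
    and lim: "\<sigma> \<longlonglongrightarrow> \<tau>" and "\<tau> \<in> T" and "\<And>n. \<sigma> n \<in> T"
  shows "uniform_limit K (\<lambda>n. f (\<sigma> n)) (f \<tau>) sequentially"
proof (rule uniform_limitI)
  fix e :: real assume "e > 0"
  define S where "S = insert \<tau> (range \<sigma>) \<times> K"
  have "compact S"
    unfolding S_def using compact_sequence_with_limit[OF lim] \<open>compact K\<close> by (rule compact_Times)
  moreover have "S \<subseteq> T \<times> K" unfolding S_def using assms by auto
  ultimately have "uniformly_continuous_on S (\<lambda>(t, z). f t z)"
    using cont by (intro compact_uniformly_continuous) (auto intro: continuous_on_subset)
  then obtain \<delta> where "\<delta> > 0"
    and \<delta>: "\<And>p p'. p \<in> S \<Longrightarrow> p' \<in> S \<Longrightarrow> dist p' p < \<delta> \<Longrightarrow> dist ((\<lambda>(t, z). f t z) p') ((\<lambda>(t, z). f t z) p) < e"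
    using \<open>e > 0\<close> unfolding uniformly_continuous_on_def by metis
  have "\<forall>\<^sub>F n in sequentially. dist (\<sigma> n) \<tau> < \<delta>"
    using lim \<open>\<delta> > 0\<close> by (rule tendstoD)
  then show "\<forall>\<^sub>F n in sequentially. \<forall>z\<in>K. dist (f (\<sigma> n) z) (f \<tau> z) < e"
  proof (rule eventually_mono, intro ballI)
    fix n z assume "dist (\<sigma> n) \<tau> < \<delta>" "z \<in> K"
    then show "dist (f (\<sigma> n) z) (f \<tau> z) < e"
      using \<delta>[of "(\<tau>, z)" "(\<sigma> n, z)"] by (simp add: S_def dist_Pair_Pair)
  qed
qed

lemma cubic_root_Re_neg:
  fixes z :: complex and p2 p1 p0 :: real
  assumes "p2 > 0" "p0 > 0" "p2 * p1 > p0"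
    and root: "z^3 + of_real p2 * z^2 + of_real p1 * z + of_real p0 = 0"
  shows "Re z < 0"
proof (rule ccontr)
  define x y where "x = Re z" and "y = Im z"
  assume "\<not> Re z < 0"
  then have "x \<ge> 0" by (simp add: x_def)
  have "p1 > 0" using assms by (smt (verit) mult_nonneg_nonpos)
  have z: "z = Complex x y" by (simp add: x_def y_def)
  have re: "x^3 - 3*x*y^2 + p2*(x^2 - y^2) + p1*x + p0 = 0"
    using arg_cong[OF root, of Re] by (simp add: z power2_eq_square power3_eq_cube algebra_simps)
  have im: "y * (3*x^2 - y^2 + 2*p2*x + p1) = 0"
    using arg_cong[OF root, of Im] by (simp add: z power2_eq_square power3_eq_cube algebra_simps)
  show False
  proof (cases "y = 0")
    case True
    then have "x^3 + p2*x^2 + p1*x + p0 = 0" using re by simp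
    moreover have "x^3 + p2*x^2 + p1*x + p0 > 0"
      using \<open>x \<ge> 0\<close> \<open>p1 > 0\<close> assms by (simp add: add_pos_nonneg add_nonneg_pos)
    ultimately show False by simp
  next
    case False
    then have "y^2 = 3*x^2 + 2*p2*x + p1" using im by simp
    then have "x^3 - 3*x*y^2 + p2*(x^2 - y^2) + p1*x + p0
        = - (8*x^3 + 8*p2*x^2 + 2*p1*x + 2*p2^2*x + (p2*p1 - p0))"
      by (simp add: algebra_simps power2_eq_square power3_eq_cube)
    moreover have "8*x^3 + 8*p2*x^2 + 2*p1*x + 2*p2^2*x + (p2*p1 - p0) > 0"
      using \<open>x \<ge> 0\<close> \<open>p1 > 0\<close> assms by (simp add: add_nonneg_pos)
    ultimately show False using re by simp
  qed
qed

lemma cubic_unique_pos_root: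
  fixes A B C :: real
  assumes "A > 0" "C < 0"
  obtains z0 where "{x. x > 0 \<and> x^3 + A*x^2 + B*x + C = 0} = {z0}"
proof -
  define h where "h x = x^3 + A*x^2 + B*x + C" for x
  define T where "T = 1 + \<bar>A\<bar> + \<bar>B\<bar> + \<bar>C\<bar>"
  have "h T \<ge> 0"
  proof -
    have "T \<ge> 1" by (simp add: T_def)
    then have "x \<le> x * T^2" "x * T \<le> x * T^2" if "x \<ge> 0" for x
      using that by (simp_all add: mult_le_cancel_left1 mult_mono self_le_power)
    then have "\<bar>B\<bar> * T + \<bar>C\<bar> \<le> (\<bar>B\<bar> + \<bar>C\<bar>) * T^2"
      unfolding distrib_right by (intro add_mono) auto
    also have "\<dots> \<le> T * T^2" by (intro mult_right_mono) (auto simp: T_def)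
    finally have "\<bar>B\<bar> * T + \<bar>C\<bar> \<le> T^3" by (simp add: power3_eq_cube power2_eq_square)
    moreover have "- (\<bar>B\<bar> * T) \<le> B * T"
      using mult_right_mono[of "- \<bar>B\<bar>" B T] \<open>T \<ge> 1\<close> by simp
    moreover have "0 \<le> A * T^2" using \<open>A > 0\<close> by simp
    ultimately show ?thesis unfolding h_def by linarith
  qed
  then have "\<exists>x\<ge>0. x \<le> T \<and> h x = 0"
    by (intro IVT') (use \<open>C < 0\<close> in \<open>auto simp: h_def T_def intro!: continuous_intros\<close>)
  then obtain z0 where "0 \<le> z0" "h z0 = 0" by blast
  then have "z0 > 0" using \<open>C < 0\<close> by (cases "z0 = 0") (auto simp: h_def)
  have unique: "z = z0" if "z > 0" "h z = 0" for z
  proof (rule ccontr)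
    assume "z \<noteq> z0"
    have "(z - z0) * (z*z0*(z + z0) + A*z*z0 - C) = z0 * h z - z * h z0"
      by (simp add: h_def algebra_simps power2_eq_square power3_eq_cube)
    then have "z*z0*(z + z0) + A*z*z0 - C = 0" using that \<open>h z0 = 0\<close> \<open>z \<noteq> z0\<close> by simp
    moreover have "z*z0*(z + z0) > 0" "A*z*z0 > 0"
      using that \<open>z0 > 0\<close> assms by simp_all
    ultimately show False using \<open>C < 0\<close> by linarith
  qed
  have "{x. x > 0 \<and> h x = 0} = {z0}"
    using unique \<open>z0 > 0\<close> \<open>h z0 = 0\<close> by blast
  then show thesis unfolding h_def by (rule that)
qed

lemma cubic_no_pos_root:
  fixes A B C x :: real
  assumes "A > 0" "B \<ge> 0" "C \<ge> 0" "x > 0"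
  shows "x^3 + A*x^2 + B*x + C \<noteq> 0"
proof -
  have "x^3 + A*x^2 + B*x + C > 0"
    using assms by (intro add_pos_nonneg) auto
  then show ?thesis by simp
qed

lemma cubic_critical_point_nonpos:
  fixes A B :: real
  assumes "A > 0" "B \<ge> 0"
  shows "(- A + sqrt (A^2 - 3*B))/3 \<le> 0"
proof -
  have "sqrt (A^2 - 3*B) \<le> sqrt (A^2)" using assms by (intro real_sqrt_le_mono) simp
  then show ?thesis using assms by simp
qed

context
  fixes a2 a1 a0 b1 b0 :: real
begin

definition char_fun :: "real \<Rightarrow> complex \<Rightarrow> complex" where
  "char_fun \<tau> z = z^3 + of_real a2 * z^2 + of_real a1 * z + of_real a0
     + (of_real b1 * z + of_real b0) * exp (- z * of_real \<tau>)"

lemma char_eq_iff_char_fun: "char_eq a2 a1 a0 b1 b0 \<tau> z \<longleftrightarrow> char_fun \<tau> z = 0"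
  by (simp add: char_eq_def char_fun_def)

definition root_radius :: real where
  "root_radius = 1 + \<bar>a2\<bar> + \<bar>a1\<bar> + \<bar>a0\<bar> + \<bar>b1\<bar> + \<bar>b0\<bar>"

lemma norm_le_root_radius:
  assumes "char_fun \<tau> z = c" "\<tau> \<ge> 0" "Re z \<ge> 0"
  shows "norm z \<le> root_radius + norm c"
proof (cases "norm z \<le> 1")
  case False
  define r where "r = norm z"
  define S where "S = \<bar>a2\<bar> + \<bar>a1\<bar> + \<bar>a0\<bar> + \<bar>b1\<bar> + \<bar>b0\<bar> + norm c"
  have r1: "r > 1" using False by (simp add: r_def)
  have "norm (exp (- z * of_real \<tau>)) \<le> 1"
    using assms by (simp add: norm_exp_eq_Re mult_nonneg_nonneg)
  then have "norm ((of_real b1 * z + of_real b0) * exp (- z * of_real \<tau>)) \<le> norm (of_real b1 * z + of_real b0)"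
    unfolding norm_mult by (simp add: mult_right_le_one_le)
  also have "\<dots> \<le> \<bar>b1\<bar> * r + \<bar>b0\<bar>"
    by (rule order.trans[OF norm_triangle_ineq]) (simp add: norm_mult r_def)
  finally have delay: "norm ((of_real b1 * z + of_real b0) * exp (- z * of_real \<tau>)) \<le> \<bar>b1\<bar> * r + \<bar>b0\<bar>" .
  define P where "P = of_real a2 * z^2 + of_real a1 * z + of_real a0
      + (of_real b1 * z + of_real b0) * exp (- z * of_real \<tau>)"
  have "norm P \<le> \<bar>a2\<bar> * r^2 + \<bar>a1\<bar> * r + \<bar>a0\<bar> + (\<bar>b1\<bar> * r + \<bar>b0\<bar>)"
    unfolding P_def using delay
    by (intro order.trans[OF norm_triangle_ineq] add_mono) (auto simp: norm_mult norm_power r_def)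
  moreover have "z^3 = c - P"
    using assms(1) by (simp add: char_fun_def P_def algebra_simps)
  ultimately have "r^3 \<le> norm c + (\<bar>a2\<bar> * r^2 + \<bar>a1\<bar> * r + \<bar>a0\<bar> + (\<bar>b1\<bar> * r + \<bar>b0\<bar>))"
    by (metis norm_power norm_triangle_ineq4 r_def add_left_mono order.trans)
  also have "\<dots> \<le> norm c * r^2 + (\<bar>a2\<bar> * r^2 + \<bar>a1\<bar> * r^2 + \<bar>a0\<bar> * r^2 + (\<bar>b1\<bar> * r^2 + \<bar>b0\<bar> * r^2))"
  proof -
    have "x \<le> x * r^2" "x * r \<le> x * r^2" if "x \<ge> 0" for x
      using r1 that by (simp_all add: mult_le_cancel_left1 mult_mono self_le_power)
    then show ?thesis by (intro add_mono) auto
  qed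
  also have "\<dots> = S * r^2" by (simp add: S_def algebra_simps)
  finally have "r * r^2 \<le> S * r^2" by (simp add: power3_eq_cube power2_eq_square)
  then have "r \<le> S" using r1 by simp
  then show ?thesis by (simp add: r_def S_def root_radius_def)
qed (smt (verit) root_radius_def abs_ge_zero norm_ge_zero)

lemma char_fun_not_constant_on_rhp:
  assumes "\<tau> \<ge> 0"
  shows "\<not> char_fun \<tau> constant_on {z. 0 < Re z}"
proof
  assume "char_fun \<tau> constant_on {z. 0 < Re z}"
  then obtain c where c: "\<And>z. 0 < Re z \<Longrightarrow> char_fun \<tau> z = c"
    unfolding constant_on_def by auto
  define t where "t = root_radius + norm c + 1"
  have "t > 0" by (simp add: t_def root_radius_def add_pos_nonneg)
  then have "t \<le> root_radius + norm c"
    using norm_le_root_radius[OF c[of "of_real t"]] assms by simp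
  then show False by (simp add: t_def)
qed

lemma char_fun_continuous: "continuous_on S (\<lambda>(\<tau>, z). char_fun \<tau> z)"
  unfolding char_fun_def split_def by (intro continuous_intros)

lemma char_fun_holomorphic: "char_fun \<tau> holomorphic_on S"
  unfolding char_fun_def by (intro holomorphic_intros)

lemma no_rhp_root_at_limit_delay:
  assumes lim: "\<sigma> \<longlonglongrightarrow> \<tau>" and "\<tau> \<ge> 0"
    and "\<And>n z. 0 < Re z \<Longrightarrow> char_fun (\<sigma> n) z \<noteq> 0" and "0 < Re z"
  shows "char_fun \<tau> z \<noteq> 0"
proof (rule Hurwitz_no_zeros[of "{z. 0 < Re z}" "\<lambda>n. char_fun (\<sigma> n)" "char_fun \<tau>" z])
  show "uniform_limit K (\<lambda>n. char_fun (\<sigma> n)) (char_fun \<tau>) sequentially"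
    if "compact K" "K \<subseteq> {z. 0 < Re z}" for K
    using char_fun_continuous \<open>compact K\<close> lim by (rule uniform_limit_of_jointly_continuous[where T = UNIV]) auto
qed (use assms char_fun_not_constant_on_rhp char_fun_holomorphic in
      \<open>auto simp: open_halfspace_Re_gt convex_connected convex_halfspace_Re_gt\<close>)

lemma closedin_delays_with_closed_rhp_root:
  assumes "I \<subseteq> {0..}"
  shows "closedin (top_of_set I) {\<tau>\<in>I. \<exists>z. 0 \<le> Re z \<and> char_fun \<tau> z = 0}"
proof -
  define K where "K = cball 0 root_radius \<inter> {z. 0 \<le> Re z}"
  define W where "W = {p \<in> K \<times> I. char_fun (snd p) (fst p) = 0}"
  have "compact K"
    unfolding K_def by (intro compact_Int_closed compact_cball closed_halfspace_Re_ge)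
  have "closedin (top_of_set (K \<times> I)) W"
    unfolding W_def char_fun_def
    by (intro continuous_closedin_preimage_constant continuous_intros)
  then have "closedin (top_of_set I) {\<tau>. \<exists>z. z \<in> K \<and> (z, \<tau>) \<in> W}"
    using \<open>compact K\<close> by (rule closedin_compact_projection[rotated])
  moreover have "{\<tau>. \<exists>z. z \<in> K \<and> (z, \<tau>) \<in> W} = {\<tau>\<in>I. \<exists>z. 0 \<le> Re z \<and> char_fun \<tau> z = 0}"
    using norm_le_root_radius[of _ _ 0] assms by (auto simp: K_def W_def)
  ultimately show ?thesis by simp
qed

lemma closedin_delays_without_open_rhp_root:
  assumes "I \<subseteq> {0..}"
  shows "closedin (top_of_set I) {\<tau>\<in>I. \<forall>z. 0 < Re z \<longrightarrow> char_fun \<tau> z \<noteq> 0}"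
  unfolding closedin_limpt islimpt_sequential
  using no_rhp_root_at_limit_delay assms by blast

lemma stable_on_interval_without_imaginary_roots:
  assumes "is_interval I" "0 \<in> I" "I \<subseteq> {0..}"
    and no_imaginary: "\<And>\<tau> z. \<tau> \<in> I \<Longrightarrow> char_eq a2 a1 a0 b1 b0 \<tau> z \<Longrightarrow> Re z \<noteq> 0"
    and stable_0: "\<And>z. char_eq a2 a1 a0 b1 b0 0 z \<Longrightarrow> Re z < 0"
    and "\<tau> \<in> I" "char_eq a2 a1 a0 b1 b0 \<tau> z"
  shows "Re z < 0"
proof -
  define U where "U = {\<tau>\<in>I. \<exists>z. 0 \<le> Re z \<and> char_fun \<tau> z = 0}"
  define V where "V = {\<tau>\<in>I. \<forall>z. 0 < Re z \<longrightarrow> char_fun \<tau> z \<noteq> 0}"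
  have "U \<union> V = I"
    by (auto simp: U_def V_def intro: less_imp_le)
  moreover have "U \<inter> V = {}"
    using no_imaginary by (fastforce simp: U_def V_def char_eq_iff_char_fun le_less)
  moreover have "closedin (top_of_set I) U" "closedin (top_of_set I) V"
    unfolding U_def V_def
    using closedin_delays_with_closed_rhp_root closedin_delays_without_open_rhp_root assms(3) by blast+
  moreover have "0 \<in> V"
    using assms(2) stable_0 by (fastforce simp: V_def char_eq_iff_char_fun)
  moreover have "connected I" using \<open>is_interval I\<close> by (simp add: is_interval_connected)
  ultimately have "U = {}" unfolding connected_closedin_eq by blast
  then have "\<not> 0 \<le> Re z"
    using assms(6,7) by (auto simp: U_def char_eq_iff_char_fun)
  then show ?thesis by simp
qed

lemma stable_at_zero:
  assumes "a2 > 0" "a0 + b0 > 0" "a2*(a1 + b1) > a0 + b0" "char_eq a2 a1 a0 b1 b0 0 z"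
  shows "Re z < 0"
  using assms by (intro cubic_root_Re_neg[of a2 "a0 + b0" "a1 + b1" z]) (auto simp: char_eq_def algebra_simps)

lemma imaginary_root_eqs:
  assumes "char_eq a2 a1 a0 b1 b0 \<tau> (\<i> * of_real \<omega>)"
  shows "(\<omega>^2)^3 + (a2^2 - 2*a1)*(\<omega>^2)^2 + (a1^2 - 2*a2*a0 - b1^2)*\<omega>^2 + (a0^2 - b0^2) = 0"
    and "(b0^2 + b1^2*\<omega>^2) * cos (\<omega>*\<tau>) = b0*(a2*\<omega>^2 - a0) + b1*\<omega>*(\<omega>^3 - a1*\<omega>)"
proof -
  define co where "co = cos (\<omega>*\<tau>)"
  define si where "si = sin (\<omega>*\<tau>)"
  have "exp (- (\<i> * of_real \<omega>) * of_real \<tau>) = Complex co (- si)"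
    by (simp add: co_def si_def exp_eq_polar cis.code mult.commute)
  then have "(\<i> * of_real \<omega>)^3 + of_real a2 * (\<i> * of_real \<omega>)^2 + of_real a1 * (\<i> * of_real \<omega>) + of_real a0
       + (of_real b1 * (\<i> * of_real \<omega>) + of_real b0) * Complex co (- si) = 0"
    using assms unfolding char_eq_def by simp
  from arg_cong[OF this, of Re] arg_cong[OF this, of Im]
  have re: "b0*co + b1*\<omega> * si = a2*\<omega>^2 - a0" and im: "b1*\<omega>*co - b0 * si = \<omega>^3 - a1*\<omega>"
    by (simp_all add: power2_eq_square power3_eq_cube algebra_simps)
  have "(b0*co + b1*\<omega> * si)^2 + (b1*\<omega>*co - b0 * si)^2 = (b0^2 + b1^2*\<omega>^2)*(co^2 + si^2)"
    by (simp add: algebra_simps power2_eq_square)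
  then have "(a2*\<omega>^2 - a0)^2 + (\<omega>^3 - a1*\<omega>)^2 = b0^2 + b1^2*\<omega>^2"
    unfolding re im by (simp add: co_def si_def)
  then show "(\<omega>^2)^3 + (a2^2 - 2*a1)*(\<omega>^2)^2 + (a1^2 - 2*a2*a0 - b1^2)*\<omega>^2 + (a0^2 - b0^2) = 0"
    by (simp add: algebra_simps power2_eq_square power3_eq_cube)
  have "b0*(b0*co + b1*\<omega> * si) + b1*\<omega>*(b1*\<omega>*co - b0 * si) = (b0^2 + b1^2*\<omega>^2)*co"
    by (simp add: algebra_simps power2_eq_square)
  then show "(b0^2 + b1^2*\<omega>^2) * cos (\<omega>*\<tau>) = b0*(a2*\<omega>^2 - a0) + b1*\<omega>*(\<omega>^3 - a1*\<omega>)"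
    unfolding re im by (simp add: co_def)
qed

lemma imaginary_root_crossing:
  assumes stable_0: "\<And>z. char_eq a2 a1 a0 b1 b0 0 z \<Longrightarrow> Re z < 0"
    and "A = a2^2 - 2*a1" "B = a1^2 - 2*a2*a0 - b1^2" "C = a0^2 - b0^2"
    and "char_eq a2 a1 a0 b1 b0 \<tau> z" "Re z = 0"
  obtains \<omega> where "\<omega> > 0" "(\<omega>^2)^3 + A*(\<omega>^2)^2 + B*\<omega>^2 + C = 0"
    "(b0^2 + b1^2*\<omega>^2) * cos (\<omega>*\<tau>) = b0*(a2*\<omega>^2 - a0) + b1*\<omega>*(\<omega>^3 - a1*\<omega>)"
proof -
  have "z \<noteq> 0"
    using stable_0[of 0] assms(5) by (auto simp: char_eq_def)
  have z: "z = \<i> * of_real (Im z)"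
    using \<open>Re z = 0\<close> by (simp add: complex_eq_iff)
  show ?thesis
  proof (rule that[of "\<bar>Im z\<bar>"])
    show "\<bar>Im z\<bar> > 0" using \<open>z \<noteq> 0\<close> z by fastforce
    show "(\<bar>Im z\<bar>^2)^3 + A*(\<bar>Im z\<bar>^2)^2 + B*\<bar>Im z\<bar>^2 + C = 0"
      using imaginary_root_eqs(1)[of \<tau> "Im z"] assms(2-5) z by simp
    show "(b0^2 + b1^2*\<bar>Im z\<bar>^2) * cos (\<bar>Im z\<bar>*\<tau>) = b0*(a2*\<bar>Im z\<bar>^2 - a0) + b1*\<bar>Im z\<bar>*(\<bar>Im z\<bar>^3 - a1*\<bar>Im z\<bar>)"
      using imaginary_root_eqs(2)[of \<tau> "Im z"] assms(5) z
      by (cases "Im z \<ge> 0") (simp_all add: algebra_simps)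
  qed
qed

lemma stable_for_all_delays:
  assumes stable_0: "\<And>z. char_eq a2 a1 a0 b1 b0 0 z \<Longrightarrow> Re z < 0"
    and ABC: "A = a2^2 - 2*a1" "B = a1^2 - 2*a2*a0 - b1^2" "C = a0^2 - b0^2"
    and no_pos_root: "\<And>x. x > 0 \<Longrightarrow> x^3 + A*x^2 + B*x + C \<noteq> 0"
    and "\<tau> \<ge> 0" "char_eq a2 a1 a0 b1 b0 \<tau> z"
  shows "Re z < 0"
proof (rule stable_on_interval_without_imaginary_roots[of "{0..}"])
  show "Re z \<noteq> 0" if root: "char_eq a2 a1 a0 b1 b0 \<sigma> z" for \<sigma> z
  proof
    assume "Re z = 0"
    then obtain \<omega> where "\<omega> > 0" "(\<omega>^2)^3 + A*(\<omega>^2)^2 + B*\<omega>^2 + C = 0"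
      using imaginary_root_crossing[OF stable_0 ABC root] by blast
    with no_pos_root[of "\<omega>^2"] show False by simp
  qed
qed (use assms in \<open>auto simp: is_interval_ci\<close>)

lemma stable_below_tau0:
  assumes stable_0: "\<And>z. char_eq a2 a1 a0 b1 b0 0 z \<Longrightarrow> Re z < 0"
    and ABC: "A = a2^2 - 2*a1" "B = a1^2 - 2*a2*a0 - b1^2" "C = a0^2 - b0^2"
    and unique: "{x. x > 0 \<and> x^3 + A*x^2 + B*x + C = 0} = {z0}"
    and "0 \<le> \<tau>" "\<tau> < tau0 a2 a1 a0 b1 b0 A B C" "char_eq a2 a1 a0 b1 b0 \<tau> z"
  shows "Re z < 0"
proof (rule stable_on_interval_without_imaginary_roots[of "{0..<tau0 a2 a1 a0 b1 b0 A B C}"])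
  define w where "w = sqrt z0"
  define F where "F = (b0 * (a2 * w^2 - a0) + b1 * w * (w^3 - a1 * w)) / (b0^2 + b1^2 * w^2)"
  have "z0 \<in> {x. x > 0 \<and> x^3 + A*x^2 + B*x + C = 0}" using unique by simp
  then have "z0 > 0" by simp
  then have "w > 0" by (simp add: w_def)
  have tau0_eq: "tau0 a2 a1 a0 b1 b0 A B C = (1 / w) * arccos F"
    unfolding tau0_def smallest_pos_root_def unique w_def F_def Let_def by simp
  show "Re z \<noteq> 0" if \<sigma>: "\<sigma> \<in> {0..<tau0 a2 a1 a0 b1 b0 A B C}" and root: "char_eq a2 a1 a0 b1 b0 \<sigma> z" for \<sigma> z
  proof
    assume "Re z = 0"
    then obtain \<omega> where "\<omega> > 0" and cubic: "(\<omega>^2)^3 + A*(\<omega>^2)^2 + B*\<omega>^2 + C = 0"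
      and cos_eq: "(b0^2 + b1^2*\<omega>^2) * cos (\<omega>*\<sigma>) = b0*(a2*\<omega>^2 - a0) + b1*\<omega>*(\<omega>^3 - a1*\<omega>)"
      using imaginary_root_crossing[OF stable_0 ABC root] by blast
    have "\<omega>^2 \<in> {x. x > 0 \<and> x^3 + A*x^2 + B*x + C = 0}" using cubic \<open>\<omega> > 0\<close> by simp
    then have "\<omega>^2 = z0" unfolding unique by simp
    then have "\<omega> = w" using \<open>\<omega> > 0\<close> by (auto simp: w_def)
    have "b0^2 + b1^2 * w^2 \<noteq> 0"
    proof
      assume "b0^2 + b1^2 * w^2 = 0"
      then have "b0 = 0" "b1 = 0" using \<open>w > 0\<close> by (auto simp: add_nonneg_eq_0_iff)
      text \<open>Without the delayed term the roots do not depend on the delay.\<close>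
      then have "char_eq a2 a1 a0 b1 b0 0 z" using root by (simp add: char_eq_def)
      with stable_0 \<open>Re z = 0\<close> show False by fastforce
    qed
    then have "cos (w*\<sigma>) = F"
      using cos_eq \<open>\<omega> = w\<close> by (simp add: F_def field_simps)
    then have "-1 \<le> F" "F \<le> 1" by (metis cos_ge_minus_one cos_le_one)+
    have "\<sigma> < arccos F / w" using \<sigma> by (simp add: tau0_eq)
    then have "w*\<sigma> < arccos F" using \<open>w > 0\<close> by (simp add: pos_less_divide_eq mult.commute)
    moreover have "0 \<le> w*\<sigma>" using \<sigma> \<open>w > 0\<close> by simp
    ultimately have "cos (arccos F) < cos (w*\<sigma>)"
      using cos_monotone_0_pi arccos_ubound[OF \<open>-1 \<le> F\<close> \<open>F \<le> 1\<close>] by blast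
    with \<open>cos (w*\<sigma>) = F\<close> \<open>-1 \<le> F\<close> \<open>F \<le> 1\<close> show False by simp
  qed
qed (use stable_0 assms(6-8) in \<open>auto simp: is_interval_def\<close>)

end

lemma model_coefficient_structure:
  fixes s d a Tmax b \<alpha> p T2 I2 V2 \<beta> k q m \<kappa> \<rho> A11 A22 :: real
  assumes pos: "s > 0" "a > 0" "Tmax > 0" "b > 0" "\<alpha> > 0" "p > 0" "T2 > 0" "I2 > 0" "V2 > 0"
    and eqT: "s - d*T2 + a*T2*(1 - (T2 + I2)/Tmax) - b*T2*V2/(1 + \<alpha>*V2) = 0"
    and \<beta>_def: "\<beta> = b*V2/(1 + \<alpha>*V2)"
    and k_def: "k = a*T2/Tmax"
    and q_def: "q = a*I2/Tmax"
    and m_def: "m = b*T2/(1 + \<alpha>*V2)^2"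
    and \<kappa>_def: "\<kappa> = p*I2/V2"
    and \<rho>_def: "\<rho> = d - a + a*(T2 + I2)/Tmax"
    and A11_def: "A11 = \<rho> + k + \<beta>"
    and A22_def: "A22 = b*T2*V2/((1 + \<alpha>*V2)*I2) + q"
  obtains \<sigma> u w where "\<sigma> > 0" "u > 0" "w > 0" "w < u" "\<beta> > 0" "k > 0" "q > 0" "\<kappa> > 0"
    "A11 = \<sigma> + k" "A22 = u + q" "u*q = \<beta>*k" "p*m = \<kappa>*w"
proof
  define D where "D = 1 + \<alpha>*V2"
  have "D > 1" using pos by (simp add: D_def)
  text \<open>The equilibrium condition for \<open>T\<close> gives \<open>\<rho> + \<beta> = s / T2\<close>.\<close>
  have "s = T2*(d - a + a*(T2 + I2)/Tmax + \<beta>)"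
    using eqT by (simp add: \<beta>_def algebra_simps)
  then show "A11 = s/T2 + k"
    using pos by (simp add: A11_def \<rho>_def)
  show "A22 = b*T2*V2/(D*I2) + q" by (simp add: A22_def D_def)
  show "b*T2*V2/(D*I2) * q = \<beta>*k" "p*m = \<kappa>*(b*T2*V2/(D*I2)/D)"
    using pos \<open>D > 1\<close> unfolding q_def k_def \<beta>_def m_def \<kappa>_def D_def[symmetric]
    by (simp_all add: field_simps power2_eq_square)
  show "b*T2*V2/(D*I2)/D < b*T2*V2/(D*I2)"
    using pos \<open>D > 1\<close> by (simp add: divide_less_eq)
qed (use pos in \<open>auto simp: \<beta>_def k_def q_def \<kappa>_def add_pos_pos\<close>)

lemma model_B_nonneg:
  fixes \<sigma> u w \<beta> k q \<kappa> p m A11 A22 a2 a1 a0 b1 b0 :: real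
  assumes pos: "\<sigma> > 0" "u > 0" "w > 0" "w < u" "\<beta> > 0" "k > 0" "q > 0" "\<kappa> > 0"
    and A11: "A11 = \<sigma> + k" and A22: "A22 = u + q" and uq: "u*q = \<beta>*k" and pm: "p*m = \<kappa>*w"
    and a2_def: "a2 = A11 + A22 + \<kappa>"
    and a1_def: "a1 = A11*A22 + \<kappa>*A11 + \<kappa>*A22 - k*q"
    and a0_def: "a0 = \<kappa>*A11*A22 - \<kappa>*k*q - p*q*m"
    and b1_def: "b1 = \<beta>*k - p*m"
    and b0_def: "b0 = \<beta>*k*\<kappa> + \<beta>*p*m - p*m*A11"
    and "a0 + b0 > 0" "a0^2 - b0^2 \<ge> 0"
  shows "a1^2 - 2*a2*a0 - b1^2 \<ge> 0"
proof -
  have a0: "a0 = \<kappa>*A11*A22 - \<kappa>*k*q - q*(\<kappa>*w)"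
    unfolding a0_def pm[symmetric] by (simp add: algebra_simps)
  have b0: "b0 = \<beta>*k*\<kappa> + \<beta>*(\<kappa>*w) - (\<kappa>*w)*A11"
    unfolding b0_def pm[symmetric] by (simp add: algebra_simps)
  have b1: "b1 = \<beta>*k - \<kappa>*w" unfolding b1_def pm ..
  define D where "D = A11*A22 - k*q"
  have D: "D = \<sigma>*u + \<sigma>*q + k*u" by (simp add: D_def A11 A22 algebra_simps)
  have "(a0 - b0) * (a0 + b0) \<ge> 0" using \<open>a0^2 - b0^2 \<ge> 0\<close> by (simp add: algebra_simps power2_eq_square)
  then have "a0 - b0 \<ge> 0" using \<open>a0 + b0 > 0\<close> by (simp add: zero_le_mult_iff)
  moreover have "a0 - b0 = \<kappa> * ((D - u*q) - w*(q + \<beta> - A11))"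
    by (simp add: a0 b0 D_def uq[symmetric] algebra_simps)
  ultimately have key: "(D - u*q) - w*(q + \<beta> - A11) \<ge> 0"
    using pos by (simp add: zero_le_mult_iff)
  have "D \<ge> u*q"
  proof (cases "q + \<beta> - A11 \<ge> 0")
    case True
    then show ?thesis using key pos by (smt (verit) mult_nonneg_nonneg)
  next
    case False
    then have "w*(q + \<beta> - A11) \<ge> u*(q + \<beta> - A11)" using pos by (intro mult_right_mono_neg) auto
    then have "D - u*q \<ge> u*(q + \<beta> - A11)" using key by linarith
    moreover have "u*\<beta> > 0" "\<sigma>*q > 0" using pos by auto
    ultimately show ?thesis unfolding D A11 by (simp add: algebra_simps)
  qed
  have "a1^2 - 2*a2*a0 - b1^2 = (D - u*q)*(D + u*q) + \<kappa>^2*(A11^2 + (A22^2 - w^2) + 2*k*q)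
        + 2*\<kappa>*q*w*(A11 + A22 + u) + 2*\<kappa>^2*q*w"
    by (simp add: a1_def a2_def a0 b1 D_def uq[symmetric] algebra_simps power2_eq_square)
  moreover have "u*q > 0" using pos by simp
  then have "(D - u*q)*(D + u*q) \<ge> 0" using \<open>D \<ge> u*q\<close> by simp
  moreover have "A22^2 - w^2 \<ge> 0" using pos A22 by (simp add: power_mono)
  ultimately show ?thesis using pos A11 A22 by simp
qed

theorem theorem2:
  fixes s d a Tmax b \<alpha> \<mu> p c T2 I2 V2 :: real
    and \<beta> k q m \<kappa> \<rho> A11 A22 a2 a1 a0 b1 b0 A B C \<Delta> :: real
  assumes pos: "s > 0" "d > 0" "a > 0" "Tmax > 0" "b > 0" "\<alpha> > 0" "\<mu> > 0" "p > 0" "c > 0"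
    and E2pos: "T2 > 0" "I2 > 0" "V2 > 0"
    and eqT: "s - d*T2 + a*T2*(1 - (T2 + I2)/Tmax) - b*T2*V2/(1 + \<alpha>*V2) = 0"
    and eqI: "b*T2*V2/(1 + \<alpha>*V2) + a*I2*(1 - (T2 + I2)/Tmax) - \<mu>*I2 = 0"
    and eqV: "p*I2 - c*V2 = 0"
    and \<beta>_def: "\<beta> = b*V2/(1 + \<alpha>*V2)"
    and k_def: "k = a*T2/Tmax"
    and q_def: "q = a*I2/Tmax"
    and m_def: "m = b*T2/(1 + \<alpha>*V2)^2"
    and \<kappa>_def: "\<kappa> = p*I2/V2"
    and \<rho>_def: "\<rho> = d - a + a*(T2 + I2)/Tmax"
    and A11_def: "A11 = \<rho> + k + \<beta>"
    and A22_def: "A22 = b*T2*V2/((1 + \<alpha>*V2)*I2) + q"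
    and a2_def: "a2 = A11 + A22 + \<kappa>"
    and a1_def: "a1 = A11*A22 + \<kappa>*A11 + \<kappa>*A22 - k*q"
    and a0_def: "a0 = \<kappa>*A11*A22 - \<kappa>*k*q - p*q*m"
    and b1_def: "b1 = \<beta>*k - p*m"
    and b0_def: "b0 = \<beta>*k*\<kappa> + \<beta>*p*m - p*m*A11"
    and A_def: "A = a2^2 - 2*a1"
    and B_def: "B = a1^2 - 2*a2*a0 - b1^2"
    and C_def: "C = a0^2 - b0^2"
    and \<Delta>_def: "\<Delta> = A^2 - 3*B"
    and H1: "a0 + b0 > 0"
    and H2: "a2*(a1 + b1) - (a0 + b0) > 0"
  shows "(C \<ge> 0 \<and> \<Delta> < 0 \<longrightarrow>
            (\<forall>\<tau>\<ge>0. \<forall>lam. char_eq a2 a1 a0 b1 b0 \<tau> lam \<longrightarrow> Re lam < 0))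
       \<and> ((C < 0 \<or> (C \<ge> 0 \<and> \<Delta> \<ge> 0 \<and> (- A + sqrt \<Delta>)/3 > 0
                 \<and> ((- A + sqrt \<Delta>)/3)^3 + A*((- A + sqrt \<Delta>)/3)^2 + B*((- A + sqrt \<Delta>)/3) + C \<le> 0))
          \<longrightarrow> (\<forall>\<tau>. 0 \<le> \<tau> \<and> \<tau> < tau0 a2 a1 a0 b1 b0 A B C \<longrightarrow>
                 (\<forall>lam. char_eq a2 a1 a0 b1 b0 \<tau> lam \<longrightarrow> Re lam < 0)))"
proof -
  obtain \<sigma> u w where coeffs: "\<sigma> > 0" "u > 0" "w > 0" "w < u" "\<beta> > 0" "k > 0" "q > 0" "\<kappa> > 0"
      "A11 = \<sigma> + k" "A22 = u + q" "u*q = \<beta>*k" "p*m = \<kappa>*w"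
    using model_coefficient_structure[OF pos(1,3-6,8) E2pos eqT \<beta>_def k_def q_def m_def \<kappa>_def
        \<rho>_def A11_def A22_def] .
  have "A = A11^2 + A22^2 + \<kappa>^2 + 2*k*q"
    by (simp add: A_def a2_def a1_def algebra_simps power2_eq_square)
  then have "A > 0" "a2 > 0" using coeffs by (simp_all add: a2_def add_pos_nonneg)
  have stable_0: "Re z < 0" if "char_eq a2 a1 a0 b1 b0 0 z" for z
    using stable_at_zero \<open>a2 > 0\<close> H1 H2 that by simp
  have B_nonneg: "B \<ge> 0" if "C \<ge> 0"
    using model_B_nonneg[OF coeffs a2_def a1_def a0_def b1_def b0_def H1] that by (simp add: B_def C_def)
  have stable_if_C_nonneg: "Re z < 0" if "C \<ge> 0" "\<tau> \<ge> 0" "char_eq a2 a1 a0 b1 b0 \<tau> z" for \<tau> z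
    using stable_for_all_delays[OF stable_0 A_def B_def C_def] cubic_no_pos_root \<open>A > 0\<close> B_nonneg that
    by blast
  have stable_if_C_neg: "Re z < 0"
    if "C < 0" "0 \<le> \<tau>" "\<tau> < tau0 a2 a1 a0 b1 b0 A B C" "char_eq a2 a1 a0 b1 b0 \<tau> z" for \<tau> z
  proof -
    obtain z0 where "{x. x > 0 \<and> x^3 + A*x^2 + B*x + C = 0} = {z0}"
      using cubic_unique_pos_root \<open>A > 0\<close> \<open>C < 0\<close> by blast
    then show ?thesis using stable_below_tau0[OF stable_0 A_def B_def C_def] that(2-4) by blast
  qed
  show ?thesis
    using stable_if_C_nonneg stable_if_C_neg cubic_critical_point_nonpos[OF \<open>A > 0\<close> B_nonneg]
    by (meson not_le \<Delta>_def)
qed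

end
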